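(* Let $T\ge1$, $K_0=\{x_0\}$ and $K_1,\dots,K_T\subseteq\mathbb R$ compact, $\Omega=K_0\times\dots\times K_T$, and let $\widehat Q$ be a martingale measure on $\Omega$ with marginals $\widehat Q_t$. Let $u_0,\dots,u_T:\mathbb R\to[-\infty,+\infty)$ be concave, upper semicontinuous, nondecreasing with $u_t(0)=0$ and $u_t(x)\le x$ for all $x$. For $\varphi_t\in C_b(K_t)$ define $$U_{\widehat Q_t}(\varphi_t)=\sup_{\alpha,\lambda\in\mathbb R}\Big(\int_{K_t}u_t(\varphi_t(x_t)+\alpha x_t+\lambda)\,d\widehat Q_t(x_t)-(\alpha x_0+\lambda)\Big).$$ Then for each $t=0,\dots,T$: 1. $U_{\widehat Q_t}$ is real valued on $C_b(K_t)$ and $U_{\widehat Q_t}(0)=0$; 2. $U_{\widehat Q_t}$ is concave and nondecreasing; 3. $U_{\widehat Q_t}$ is stock additive on $C_b(K_t)$: $U_{\widehat Q_t}(\varphi_t+\alpha_tX_t+\lambda_t)=U_{\widehat Q_t}(\varphi_t)+\alpha_tx_0+\lambda_t$ for all $\alpha_t,\lambda_t\in\mathbb R$, $\varphi_t\in C_b(K_t)$, where $X_t(x_t)=x_t$.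
   Context: A martingale measure on $\Omega$ is a Borel probability measure under which the canonical process $X_t(x)=x_t$ is a martingale with respect to its natural filtration. $C_b(K_t)$: continuous real functions on $K_t$. *)

theory Defs
  imports "HOL-Probability.Probability"
begin

text \<open>Paths are functions \<open>nat \<Rightarrow> real\<close>; the path space
  \<open>\<Omega> = K_0 \<times> ... \<times> K_T\<close> is \<open>PiE {0..T} K\<close> with the product
  sigma-algebra of the Borel sets of the \<open>K_t\<close> (this equals the Borel sigma-algebra
  of \<open>\<Omega>\<close>, since everything is second countable).\<close>

definition path_sets :: "nat \<Rightarrow> (nat \<Rightarrow> real set) \<Rightarrow> (nat \<Rightarrow> real) measure" where
  "path_sets T K = PiM {0..T} (\<lambda>t. restrict_space borel (K t))"

definition nat_filtration :: "(nat \<Rightarrow> real) measure \<Rightarrow> nat \<Rightarrow> (nat \<Rightarrow> real) set set" where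
  "nat_filtration Q t =
     sigma_sets (space Q) (\<Union>s\<in>{0..t}. {(\<lambda>x. x s) -` B \<inter> space Q | B. B \<in> sets borel})"

definition martingale_measure :: "nat \<Rightarrow> (nat \<Rightarrow> real) measure \<Rightarrow> bool" where
  "martingale_measure T Q \<longleftrightarrow>
     prob_space Q \<and>
     (\<forall>t\<le>T. integrable Q (\<lambda>x. x t)) \<and>
     (\<forall>t<T. \<forall>A\<in>nat_filtration Q t.
        set_lebesgue_integral Q A (\<lambda>x. x (Suc t)) = set_lebesgue_integral Q A (\<lambda>x. x t))"

definition marginal :: "(nat \<Rightarrow> real) measure \<Rightarrow> (nat \<Rightarrow> real set) \<Rightarrow> nat \<Rightarrow> real measure" where
  "marginal Q K t = distr Q (restrict_space borel (K t)) (\<lambda>x. x t)"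

definition eint :: "'a measure \<Rightarrow> ('a \<Rightarrow> ereal) \<Rightarrow> ereal" where
  "eint M g = enn2ereal (\<integral>\<^sup>+ x. e2ennreal (g x) \<partial>M) - enn2ereal (\<integral>\<^sup>+ x. e2ennreal (- g x) \<partial>M)"

definition Ufun :: "(real \<Rightarrow> ereal) \<Rightarrow> real measure \<Rightarrow> real \<Rightarrow> (real \<Rightarrow> real) \<Rightarrow> ereal" where
  "Ufun u Qt x0 \<phi> =
     (SUP p\<in>(UNIV :: (real \<times> real) set).
        eint Qt (\<lambda>y. u (\<phi> y + fst p * y + snd p)) - ereal (fst p * x0 + snd p))"

definition concave_ereal :: "(real \<Rightarrow> ereal) \<Rightarrow> bool" where
  "concave_ereal u \<longleftrightarrow> (\<forall>x y a. 0 \<le> a \<and> a \<le> 1 \<longrightarrow>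
      ereal a * u x + ereal (1 - a) * u y \<le> u (a * x + (1 - a) * y))"

definition usc_ereal :: "(real \<Rightarrow> ereal) \<Rightarrow> bool" where
  "usc_ereal u \<longleftrightarrow> (\<forall>c. closed {x. c \<le> u x})"

end

theory Submission
  imports Defs
begin

text \<open>Stock additivity is a
  reindexing of this supremum and monotonicity is inherited from \<open>u\<close>. The hedge
  \<open>(0, -inf \<phi>)\<close> bounds \<open>U \<phi>\<close> below by \<open>inf \<phi>\<close>, while \<open>u(x) \<le> x\<close> together with
  the martingale property \<open>\<integral> y dQ\<^sub>t = x\<^sub>0\<close> bounds it above by \<open>\<integral> \<phi> dQ\<^sub>t\<close>.
  Concavity holds because the objective is jointly concave in \<open>(\<phi>, \<alpha>, \<lambda>)\<close>: the
  convex combination of two hedges is a hedge for the convex combination of the claims.\<close>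

lemma ereal_weighted_SUP_le:
  fixes F G :: "'i \<Rightarrow> ereal" and a b :: real
  assumes a: "0 < a" and b: "0 < b"
    and F_fin: "\<bar>SUP i. F i\<bar> \<noteq> \<infinity>" and G_fin: "\<bar>SUP j. G j\<bar> \<noteq> \<infinity>"
    and le: "\<And>i j. F i \<noteq> -\<infinity> \<Longrightarrow> G j \<noteq> -\<infinity> \<Longrightarrow> ereal a * F i + ereal b * G j \<le> c"
  shows "ereal a * (SUP i. F i) + ereal b * (SUP j. G j) \<le> c"
proof -
  have "(SUP i. ereal a * F i) + ereal b * (SUP j. G j) \<le> c"
  proof (rule SUP_ereal_le_addI)
    show "ereal b * (SUP j. G j) \<noteq> -\<infinity>" using G_fin by auto
    fix i
    have Fi: "F i \<le> (SUP i. F i)" by (rule SUP_upper) simp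
    show "ereal a * F i + ereal b * (SUP j. G j) \<le> c"
    proof (cases "F i = -\<infinity>")
      case True
      then show ?thesis using a G_fin by auto
    next
      case False
      then have Fi_fin: "\<bar>F i\<bar> \<noteq> \<infinity>" using Fi F_fin by auto
      have "(SUP j. ereal b * G j) + ereal a * F i \<le> c"
      proof (rule SUP_ereal_le_addI)
        show "ereal a * F i \<noteq> -\<infinity>" using Fi_fin by auto
        fix j
        show "ereal b * G j + ereal a * F i \<le> c"
        proof (cases "G j = -\<infinity>")
          case True
          then show ?thesis using b Fi_fin by auto
        qed (use le[OF False] in \<open>simp add: add.commute\<close>)
      qed
      then show ?thesis by (simp add: Sup_ereal_mult_left' add.commute less_imp_le[OF b])
    qed
  qed
  then show ?thesis by (simp add: Sup_ereal_mult_left' less_imp_le[OF a])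
qed

lemma eint_mono:
  fixes f g :: "'a \<Rightarrow> ereal"
  assumes "AE x in M. f x \<le> g x"
  shows "eint M f \<le> eint M g"
proof -
  have "(\<integral>\<^sup>+x. e2ennreal (f x) \<partial>M) \<le> (\<integral>\<^sup>+x. e2ennreal (g x) \<partial>M)"
    by (rule nn_integral_mono_AE) (use assms in \<open>auto elim!: eventually_mono intro: e2ennreal_mono\<close>)
  moreover have "(\<integral>\<^sup>+x. e2ennreal (- g x) \<partial>M) \<le> (\<integral>\<^sup>+x. e2ennreal (- f x) \<partial>M)"
    by (rule nn_integral_mono_AE) (use assms in \<open>auto elim!: eventually_mono intro: e2ennreal_mono\<close>)
  ultimately show ?thesis
    unfolding eint_def by (intro ereal_minus_mono) (simp_all add: less_eq_ennreal.rep_eq)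
qed

lemma eint_cong_AE:
  assumes "AE x in M. f x = g x"
  shows "eint M f = eint M g"
  using assms by (intro antisym eint_mono) (auto elim: eventually_mono)

lemma enn2ereal_eq_ereal_enn2real: "a \<noteq> \<infinity> \<Longrightarrow> enn2ereal a = ereal (enn2real a)"
  by (cases a) auto

lemma eint_ereal:
  assumes "integrable M h"
  shows "eint M (\<lambda>x. ereal (h x)) = ereal (\<integral>x. h x \<partial>M)"
proof -
  have "(\<integral>\<^sup>+x. ennreal (h x) \<partial>M) \<noteq> \<infinity>" "(\<integral>\<^sup>+x. ennreal (- h x) \<partial>M) \<noteq> \<infinity>"
    using assms by (auto simp: real_integrable_def)
  moreover have "(\<lambda>x. - ereal (h x)) = (\<lambda>x. ereal (- h x))" by simp
  ultimately show ?thesis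
    unfolding eint_def real_lebesgue_integral_def[OF assms]
    by (simp add: enn2ereal_eq_ereal_enn2real)
qed

lemma eint_bounded_above_real_valued:
  fixes f :: "'a \<Rightarrow> ereal"
  assumes "finite_measure M" and f: "f \<in> borel_measurable M"
    and le: "\<And>x. x \<in> space M \<Longrightarrow> f x \<le> ereal C" and ne: "eint M f \<noteq> -\<infinity>"
  obtains h where "integrable M h" and "AE x in M. f x = ereal (h x)"
proof
  interpret finite_measure M by fact
  have "(\<integral>\<^sup>+x. e2ennreal (f x) \<partial>M) \<le> (\<integral>\<^sup>+x. ennreal (max C 0) \<partial>M)"
    by (intro nn_integral_mono)
      (metis e2ennreal_ereal e2ennreal_mono le max.cobounded1 ennreal_leI order_trans)
  also have "\<dots> < \<infinity>" by (simp add: ennreal_mult_eq_top_iff less_top[symmetric])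
  finally have pos: "(\<integral>\<^sup>+x. e2ennreal (f x) \<partial>M) \<noteq> \<infinity>" by simp
  with ne have neg: "(\<integral>\<^sup>+x. e2ennreal (- f x) \<partial>M) \<noteq> \<infinity>"
    unfolding eint_def by (auto simp: enn2ereal_eq_ereal_enn2real)
  have "AE x in M. e2ennreal (- f x) \<noteq> \<infinity>"
    by (rule nn_integral_PInf_AE) (use f neg in auto)
  then show ae: "AE x in M. f x = ereal (real_of_ereal (f x))"
  proof (rule AE_mp, intro AE_I2 impI)
    fix x assume "x \<in> space M" and "e2ennreal (- f x) \<noteq> \<infinity>"
    with le[of x] show "f x = ereal (real_of_ereal (f x))" by (cases "f x") auto
  qed
  have "(\<integral>\<^sup>+x. ennreal (real_of_ereal (f x)) \<partial>M) = (\<integral>\<^sup>+x. e2ennreal (f x) \<partial>M)"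
    by (rule nn_integral_cong_AE) (use ae in \<open>eventually_elim, metis e2ennreal_ereal\<close>)
  moreover have "(\<integral>\<^sup>+x. ennreal (- real_of_ereal (f x)) \<partial>M) = (\<integral>\<^sup>+x. e2ennreal (- f x) \<partial>M)"
    by (rule nn_integral_cong_AE)
      (use ae in \<open>eventually_elim, metis e2ennreal_ereal uminus_ereal.simps(1)\<close>)
  moreover have "(\<lambda>x. real_of_ereal (f x)) \<in> borel_measurable M" using f by measurable
  ultimately show "integrable M (\<lambda>x. real_of_ereal (f x))"
    using pos neg by (simp add: real_integrable_def)
qed

lemma eint_convex_combination_le:
  fixes f g h :: "'a \<Rightarrow> ereal"
  assumes M: "finite_measure M"
    and f: "f \<in> borel_measurable M" "\<And>x. x \<in> space M \<Longrightarrow> f x \<le> ereal Cf" "eint M f \<noteq> -\<infinity>"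
    and g: "g \<in> borel_measurable M" "\<And>x. x \<in> space M \<Longrightarrow> g x \<le> ereal Cg" "eint M g \<noteq> -\<infinity>"
    and le: "AE x in M. ereal a * f x + ereal (1 - a) * g x \<le> h x"
  shows "ereal a * eint M f + ereal (1 - a) * eint M g \<le> eint M h"
proof -
  obtain f' where f': "integrable M f'" "AE x in M. f x = ereal (f' x)"
    using eint_bounded_above_real_valued[OF M f] .
  obtain g' where g': "integrable M g'" "AE x in M. g x = ereal (g' x)"
    using eint_bounded_above_real_valued[OF M g] .
  have "ereal a * eint M f + ereal (1 - a) * eint M g
      = ereal (a * (\<integral>x. f' x \<partial>M) + (1 - a) * (\<integral>x. g' x \<partial>M))"
    using eint_cong_AE[OF f'(2)] eint_cong_AE[OF g'(2)] by (simp add: eint_ereal f'(1) g'(1))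
  also have "\<dots> = eint M (\<lambda>x. ereal (a * f' x + (1 - a) * g' x))"
    using f'(1) g'(1) by (simp add: eint_ereal)
  also have "\<dots> \<le> eint M h"
    by (rule eint_mono) (use le f'(2) g'(2) in \<open>eventually_elim, simp\<close>)
  finally show ?thesis .
qed

definition hedge_value :: "(real \<Rightarrow> ereal) \<Rightarrow> real measure \<Rightarrow> real \<Rightarrow> (real \<Rightarrow> real) \<Rightarrow> real \<Rightarrow> real \<Rightarrow> ereal"
  where "hedge_value u M x0 \<phi> \<alpha> l = eint M (\<lambda>y. u (\<phi> y + \<alpha> * y + l)) - ereal (\<alpha> * x0 + l)"

lemma Ufun_eq_SUP_hedge_value: "Ufun u M x0 \<phi> = (SUP p. hedge_value u M x0 \<phi> (fst p) (snd p))"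
  by (simp add: Ufun_def hedge_value_def)

lemma hedge_value_le_Ufun: "hedge_value u M x0 \<phi> \<alpha> l \<le> Ufun u M x0 \<phi>"
  unfolding Ufun_eq_SUP_hedge_value by (rule SUP_upper2[of "(\<alpha>, l)"]) simp_all

lemma hedge_value_add_affine:
  "hedge_value u M x0 (\<lambda>y. \<phi> y + \<alpha> * y + l) \<beta> m
    = hedge_value u M x0 \<phi> (\<beta> + \<alpha>) (m + l) + ereal (\<alpha> * x0 + l)"
proof -
  have "eint M (\<lambda>y. u (\<phi> y + \<alpha> * y + l + \<beta> * y + m))
      = eint M (\<lambda>y. u (\<phi> y + (\<beta> + \<alpha>) * y + (m + l)))"
    by (simp add: algebra_simps)
  then show ?thesis
    unfolding hedge_value_def
    by (cases "eint M (\<lambda>y. u (\<phi> y + (\<beta> + \<alpha>) * y + (m + l)))") (auto simp: algebra_simps)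
qed

lemma Ufun_add_affine:
  "Ufun u M x0 (\<lambda>y. \<phi> y + \<alpha> * y + l) = Ufun u M x0 \<phi> + ereal (\<alpha> * x0 + l)"
proof -
  define shift where "shift p = (fst p + \<alpha>, snd p + l)" for p :: "real \<times> real"
  define H where "H p = hedge_value u M x0 \<phi> (fst p) (snd p)" for p
  have "range shift = UNIV"
    by (rule surjI[of _ "\<lambda>q. (fst q - \<alpha>, snd q - l)"]) (simp add: shift_def)
  have "Ufun u M x0 (\<lambda>y. \<phi> y + \<alpha> * y + l) = (SUP p. H (shift p) + ereal (\<alpha> * x0 + l))"
    by (simp add: Ufun_eq_SUP_hedge_value hedge_value_add_affine H_def shift_def)
  also have "\<dots> = (SUP p. H (shift p)) + ereal (\<alpha> * x0 + l)"
    by (rule SUP_ereal_add_left) auto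
  also have "(SUP p. H (shift p)) = (SUP q\<in>range shift. H q)"
    by (simp add: image_comp)
  also have "\<dots> = Ufun u M x0 \<phi>"
    unfolding \<open>range shift = UNIV\<close> Ufun_eq_SUP_hedge_value H_def ..
  finally show ?thesis .
qed

lemma Ufun_mono:
  assumes "mono u" and "\<And>y. y \<in> space M \<Longrightarrow> \<phi> y \<le> \<psi> y"
  shows "Ufun u M x0 \<phi> \<le> Ufun u M x0 \<psi>"
  unfolding Ufun_eq_SUP_hedge_value
proof (rule SUP_mono, intro bexI)
  fix p :: "real \<times> real"
  have "eint M (\<lambda>y. u (\<phi> y + fst p * y + snd p)) \<le> eint M (\<lambda>y. u (\<psi> y + fst p * y + snd p))"
    using assms by (intro eint_mono AE_I2) (simp add: monoD)
  then show "hedge_value u M x0 \<phi> (fst p) (snd p) \<le> hedge_value u M x0 \<psi> (fst p) (snd p)"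
    unfolding hedge_value_def by (rule ereal_minus_mono) simp
qed simp

lemma Ufun_ge_lower_bound:
  assumes "mono u" and "u 0 = 0" and "\<And>y. y \<in> space M \<Longrightarrow> c \<le> \<phi> y"
  shows "ereal c \<le> Ufun u M x0 \<phi>"
proof -
  have "0 = eint M (\<lambda>_. ereal 0)" by (simp add: eint_ereal)
  also have "\<dots> \<le> eint M (\<lambda>y. u (\<phi> y + 0 * y + - c))"
  proof (intro eint_mono AE_I2)
    fix y assume "y \<in> space M"
    then have "u 0 \<le> u (\<phi> y + 0 * y + - c)" using assms(1,3) by (simp add: monoD)
    then show "ereal 0 \<le> u (\<phi> y + 0 * y + - c)" using assms(2) by (simp add: zero_ereal_def)
  qed
  finally have "ereal c \<le> hedge_value u M x0 \<phi> 0 (- c)"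
    unfolding hedge_value_def by (cases "eint M (\<lambda>y. u (\<phi> y + 0 * y + - c))") auto
  also have "\<dots> \<le> Ufun u M x0 \<phi>" by (rule hedge_value_le_Ufun)
  finally show ?thesis .
qed

lemma Ufun_le_expectation:
  assumes "prob_space M" and \<phi>: "integrable M \<phi>" and id: "integrable M (\<lambda>y. y)"
    and mean: "(\<integral>y. y \<partial>M) = x0" and le_id: "\<And>x. u x \<le> ereal x"
  shows "Ufun u M x0 \<phi> \<le> ereal (\<integral>y. \<phi> y \<partial>M)"
  unfolding Ufun_eq_SUP_hedge_value
proof (rule SUP_least)
  interpret prob_space M by fact
  fix p :: "real \<times> real"
  have "eint M (\<lambda>y. u (\<phi> y + fst p * y + snd p)) \<le> eint M (\<lambda>y. ereal (\<phi> y + fst p * y + snd p))"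
    using le_id by (intro eint_mono AE_I2)
  also have "\<dots> = ereal (\<integral>y. \<phi> y + fst p * y + snd p \<partial>M)"
    using \<phi> id by (intro eint_ereal) simp
  also have "(\<integral>y. \<phi> y + fst p * y + snd p \<partial>M) = (\<integral>y. \<phi> y \<partial>M) + (fst p * x0 + snd p)"
    using \<phi> id mean by (simp add: prob_space)
  finally show "hedge_value u M x0 \<phi> (fst p) (snd p) \<le> ereal (\<integral>y. \<phi> y \<partial>M)"
    unfolding hedge_value_def by (cases "eint M (\<lambda>y. u (\<phi> y + fst p * y + snd p))") auto
qed

lemma usc_ereal_borel_measurable:
  assumes "usc_ereal u"
  shows "u \<in> borel_measurable borel"
proof (rule borel_measurableI_ge)
  fix c :: ereal
  show "{x \<in> space borel. c \<le> u x} \<in> sets borel"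
    using assms by (simp add: usc_ereal_def)
qed

locale Ufun_on_compact = prob_space M for M :: "real measure" +
  fixes S :: "real set" and x0 :: real and u :: "real \<Rightarrow> ereal"
  assumes sets_eq: "sets M = sets (restrict_space borel S)"
    and compact: "compact S"
    and mean: "(\<integral>y. y \<partial>M) = x0"
    and concave: "concave_ereal u"
    and usc: "usc_ereal u"
    and mono: "mono u"
    and u0: "u 0 = 0"
    and le_id: "\<And>x. u x \<le> ereal x"
begin

lemma space_eq: "space M = S"
  using sets_eq_imp_space_eq[OF sets_eq] by (simp add: space_restrict_space)

lemma continuous_on_measurable:
  "continuous_on S (\<phi> :: real \<Rightarrow> real) \<Longrightarrow> \<phi> \<in> borel_measurable M"
  unfolding measurable_cong_sets[OF sets_eq refl]
  by (rule borel_measurable_continuous_on_restrict)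

lemma continuous_on_bounded:
  fixes \<phi> :: "real \<Rightarrow> real"
  assumes "continuous_on S \<phi>"
  obtains B where "\<And>y. y \<in> S \<Longrightarrow> \<bar>\<phi> y\<bar> \<le> B"
proof -
  have "bounded (\<phi> ` S)" by (intro compact_imp_bounded compact_continuous_image assms compact)
  then show ?thesis using that by (auto simp: bounded_real)
qed

lemma continuous_on_integrable:
  fixes \<phi> :: "real \<Rightarrow> real"
  assumes "continuous_on S \<phi>"
  shows "integrable M \<phi>"
proof -
  obtain B where "\<And>y. y \<in> S \<Longrightarrow> \<bar>\<phi> y\<bar> \<le> B" using continuous_on_bounded[OF assms] by blast
  then show ?thesis
    using continuous_on_measurable[OF assms] by (intro integrable_const_bound[of _ B]) (auto simp: space_eq)
qed

lemma Ufun_finite: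
  assumes "continuous_on S \<phi>"
  shows "\<bar>Ufun u M x0 \<phi>\<bar> \<noteq> \<infinity>"
proof -
  obtain B where "\<And>y. y \<in> S \<Longrightarrow> \<bar>\<phi> y\<bar> \<le> B" using continuous_on_bounded[OF assms] by blast
  then have "ereal (- B) \<le> Ufun u M x0 \<phi>"
    using mono u0 by (intro Ufun_ge_lower_bound) (force simp: space_eq)+
  moreover have "Ufun u M x0 \<phi> \<le> ereal (\<integral>y. \<phi> y \<partial>M)"
    using prob_space_axioms mean le_id
    by (intro Ufun_le_expectation continuous_on_integrable assms continuous_on_id)
  ultimately show ?thesis by auto
qed

lemma Ufun_zero: "Ufun u M x0 (\<lambda>_. 0) = 0"
proof (rule antisym)
  show "Ufun u M x0 (\<lambda>_. 0) \<le> 0"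
    using Ufun_le_expectation[OF prob_space_axioms _ _ mean le_id, of "\<lambda>_. 0"]
    by (simp add: continuous_on_integrable zero_ereal_def)
  show "0 \<le> Ufun u M x0 (\<lambda>_. 0)"
    using Ufun_ge_lower_bound[OF mono u0, of M 0 "\<lambda>_. 0"] by (simp add: zero_ereal_def)
qed

lemma u_comp_measurable:
  "continuous_on S (v :: real \<Rightarrow> real) \<Longrightarrow> (\<lambda>y. u (v y)) \<in> borel_measurable M"
  using measurable_compose[OF continuous_on_measurable usc_ereal_borel_measurable[OF usc]] .

lemma u_comp_bounded_above:
  fixes v :: "real \<Rightarrow> real"
  assumes "continuous_on S v"
  obtains C where "\<And>y. y \<in> space M \<Longrightarrow> u (v y) \<le> ereal C"
proof -
  obtain C where "\<And>y. y \<in> S \<Longrightarrow> \<bar>v y\<bar> \<le> C" using continuous_on_bounded[OF assms] by blast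
  then show ?thesis
    using that le_id by (metis abs_le_D1 ereal_less_eq(3) order_trans space_eq)
qed

lemma eint_u_concave:
  assumes v: "continuous_on S v" and w: "continuous_on S w" and a: "0 \<le> a" "a \<le> 1"
    and "eint M (\<lambda>y. u (v y)) \<noteq> -\<infinity>" and "eint M (\<lambda>y. u (w y)) \<noteq> -\<infinity>"
  shows "ereal a * eint M (\<lambda>y. u (v y)) + ereal (1 - a) * eint M (\<lambda>y. u (w y))
    \<le> eint M (\<lambda>y. u (a * v y + (1 - a) * w y))"
proof -
  obtain Cv where "\<And>y. y \<in> space M \<Longrightarrow> u (v y) \<le> ereal Cv"
    using u_comp_bounded_above[OF v] by blast
  moreover obtain Cw where "\<And>y. y \<in> space M \<Longrightarrow> u (w y) \<le> ereal Cw"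
    using u_comp_bounded_above[OF w] by blast
  moreover have "AE y in M. ereal a * u (v y) + ereal (1 - a) * u (w y) \<le> u (a * v y + (1 - a) * w y)"
    using concave a unfolding concave_ereal_def by simp
  ultimately show ?thesis
    using assms by (intro eint_convex_combination_le[OF finite_measure_axioms] u_comp_measurable)
qed

lemma hedge_value_concave:
  assumes \<phi>: "continuous_on S \<phi>" and \<psi>: "continuous_on S \<psi>" and a: "0 \<le> a" "a \<le> 1"
    and "hedge_value u M x0 \<phi> \<alpha> l \<noteq> -\<infinity>" and "hedge_value u M x0 \<psi> \<beta> m \<noteq> -\<infinity>"
  shows "ereal a * hedge_value u M x0 \<phi> \<alpha> l + ereal (1 - a) * hedge_value u M x0 \<psi> \<beta> m
    \<le> hedge_value u M x0 (\<lambda>y. a * \<phi> y + (1 - a) * \<psi> y) (a * \<alpha> + (1 - a) * \<beta>) (a * l + (1 - a) * m)"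
proof -
  define E where "E v = eint M (\<lambda>y. u (v y))" for v
  define v where "v y = \<phi> y + \<alpha> * y + l" for y
  define w where "w y = \<psi> y + \<beta> * y + m" for y
  define z where "z y = a * v y + (1 - a) * w y" for y
  have hv: "hedge_value u M x0 \<phi> \<alpha> l = E v - ereal (\<alpha> * x0 + l)"
    and hw: "hedge_value u M x0 \<psi> \<beta> m = E w - ereal (\<beta> * x0 + m)"
    by (simp_all add: hedge_value_def E_def v_def w_def)
  have "a * \<phi> y + (1 - a) * \<psi> y + (a * \<alpha> + (1 - a) * \<beta>) * y + (a * l + (1 - a) * m) = z y" for y
    unfolding z_def v_def w_def by (simp add: algebra_simps)
  then have hz: "hedge_value u M x0 (\<lambda>y. a * \<phi> y + (1 - a) * \<psi> y) (a * \<alpha> + (1 - a) * \<beta>) (a * l + (1 - a) * m)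
      = E z - ereal ((a * \<alpha> + (1 - a) * \<beta>) * x0 + (a * l + (1 - a) * m))"
    by (simp only: hedge_value_def E_def)
  have "hedge_value u M x0 \<phi> \<alpha> l < \<infinity>" "hedge_value u M x0 \<psi> \<beta> m < \<infinity>"
    using hedge_value_le_Ufun[of u M x0 \<phi> \<alpha> l] hedge_value_le_Ufun[of u M x0 \<psi> \<beta> m]
      Ufun_finite[OF \<phi>] Ufun_finite[OF \<psi>] by auto
  with assms(5,6) obtain ev ew where ev: "E v = ereal ev" and ew: "E w = ereal ew"
    unfolding hv hw by (cases "E v"; cases "E w") auto
  have "continuous_on S v" "continuous_on S w"
    unfolding v_def w_def by (intro continuous_intros \<phi> \<psi>)+
  then have "ereal a * E v + ereal (1 - a) * E w \<le> E z"
    unfolding E_def z_def using ev ew by (intro eint_u_concave a) (auto simp: E_def)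
  then show ?thesis
    unfolding hv hw hz ev ew by (cases "E z") (auto simp: algebra_simps)
qed

lemma Ufun_concave:
  assumes \<phi>: "continuous_on S \<phi>" and \<psi>: "continuous_on S \<psi>" and a: "0 \<le> a" "a \<le> 1"
  shows "ereal a * Ufun u M x0 \<phi> + ereal (1 - a) * Ufun u M x0 \<psi>
    \<le> Ufun u M x0 (\<lambda>y. a * \<phi> y + (1 - a) * \<psi> y)"
proof -
  consider "a = 0" | "a = 1" | "0 < a" "a < 1" using a by force
  then show ?thesis
  proof cases
    case 3
    show ?thesis
    proof (unfold Ufun_eq_SUP_hedge_value[of u M x0 \<phi>] Ufun_eq_SUP_hedge_value[of u M x0 \<psi>],
        rule ereal_weighted_SUP_le)
      show "\<bar>SUP p. hedge_value u M x0 \<phi> (fst p) (snd p)\<bar> \<noteq> \<infinity>"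
        "\<bar>SUP q. hedge_value u M x0 \<psi> (fst q) (snd q)\<bar> \<noteq> \<infinity>"
        using Ufun_finite[OF \<phi>] Ufun_finite[OF \<psi>] by (simp_all add: Ufun_eq_SUP_hedge_value)
      fix p q :: "real \<times> real"
      assume "hedge_value u M x0 \<phi> (fst p) (snd p) \<noteq> -\<infinity>" "hedge_value u M x0 \<psi> (fst q) (snd q) \<noteq> -\<infinity>"
      then have "ereal a * hedge_value u M x0 \<phi> (fst p) (snd p) + ereal (1 - a) * hedge_value u M x0 \<psi> (fst q) (snd q)
          \<le> hedge_value u M x0 (\<lambda>y. a * \<phi> y + (1 - a) * \<psi> y)
               (a * fst p + (1 - a) * fst q) (a * snd p + (1 - a) * snd q)"
        by (rule hedge_value_concave[OF \<phi> \<psi> a])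
      also have "\<dots> \<le> Ufun u M x0 (\<lambda>y. a * \<phi> y + (1 - a) * \<psi> y)"
        by (rule hedge_value_le_Ufun)
      finally show "ereal a * hedge_value u M x0 \<phi> (fst p) (snd p) + ereal (1 - a) * hedge_value u M x0 \<psi> (fst q) (snd q)
          \<le> Ufun u M x0 (\<lambda>y. a * \<phi> y + (1 - a) * \<psi> y)" .
    qed (use 3 in auto)
  qed (simp_all add: zero_ereal_def[symmetric])
qed

end

lemma path_component_measurable:
  assumes "sets Q = sets (path_sets T K)" and "t \<le> T"
  shows "(\<lambda>x. x t) \<in> measurable Q (restrict_space borel (K t))"
  unfolding measurable_cong_sets[OF assms(1) refl] path_sets_def
  by (rule measurable_component_singleton) (use assms(2) in auto)

lemma martingale_measure_expectation_eq:
  assumes "martingale_measure T Q" and "t \<le> T"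
  shows "(\<integral>x. x t \<partial>Q) = (\<integral>x. x 0 \<partial>Q)"
  using assms(2)
proof (induction t)
  case (Suc t)
  have "space Q \<in> nat_filtration Q t"
    unfolding nat_filtration_def by (rule sigma_sets_top)
  with assms(1) Suc.prems
  have "(\<integral>x \<in> space Q. x (Suc t) \<partial>Q) = (\<integral>x \<in> space Q. x t \<partial>Q)"
    unfolding martingale_measure_def by simp
  with assms(1) Suc show ?case
    unfolding martingale_measure_def by (simp add: set_integral_space)
qed simp

lemma marginal_mean:
  assumes "martingale_measure T Q" and "sets Q = sets (path_sets T K)"
    and "K 0 = {x0}" and "t \<le> T"
  shows "(\<integral>y. y \<partial>marginal Q K t) = x0"
proof -
  interpret prob_space Q using assms(1) by (simp add: martingale_measure_def)
  have "space Q = PiE {0..T} K"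
    using sets_eq_imp_space_eq[OF assms(2)] by (simp add: path_sets_def space_PiM space_restrict_space)
  then have "\<And>x. x \<in> space Q \<Longrightarrow> x 0 = x0"
    using assms(3) by (auto simp: PiE_def Pi_def)
  then have "(\<integral>x. x 0 \<partial>Q) = (\<integral>x. x0 \<partial>Q)"
    by (rule Bochner_Integration.integral_cong[OF refl])
  then have "(\<integral>x. x 0 \<partial>Q) = x0"
    by (simp add: prob_space)
  moreover have "(\<integral>y. y \<partial>marginal Q K t) = (\<integral>x. x t \<partial>Q)"
    unfolding marginal_def
    by (rule integral_distr[OF path_component_measurable[OF assms(2,4)]]) (simp add: measurable_restrict_space1)
  ultimately show ?thesis
    using martingale_measure_expectation_eq[OF assms(1,4)] by simp
qed

theorem lemma4p2:
  fixes T :: nat and K :: "nat \<Rightarrow> real set" and x0 :: real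
    and Q :: "(nat \<Rightarrow> real) measure" and u :: "nat \<Rightarrow> real \<Rightarrow> ereal"
  assumes "T \<ge> 1"
    and "K 0 = {x0}"
    and "\<forall>t\<in>{1..T}. compact (K t)"
    and "sets Q = sets (path_sets T K)"
    and "martingale_measure T Q"
    and "\<forall>t\<le>T. concave_ereal (u t) \<and> usc_ereal (u t) \<and> mono (u t) \<and> u t 0 = 0
               \<and> (\<forall>x. u t x \<le> ereal x)"
  shows "\<forall>t\<le>T. let U = Ufun (u t) (marginal Q K t) x0 in
     (\<forall>\<phi>. continuous_on (K t) \<phi> \<longrightarrow> \<bar>U \<phi>\<bar> \<noteq> \<infinity>) \<and>
     U (\<lambda>_. 0) = 0 \<and>
     (\<forall>\<phi> \<psi> a. continuous_on (K t) \<phi> \<and> continuous_on (K t) \<psi> \<and> 0 \<le> a \<and> a \<le> 1 \<longrightarrow>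
        ereal a * U \<phi> + ereal (1 - a) * U \<psi> \<le> U (\<lambda>y. a * \<phi> y + (1 - a) * \<psi> y)) \<and>
     (\<forall>\<phi> \<psi>. continuous_on (K t) \<phi> \<and> continuous_on (K t) \<psi> \<and> (\<forall>y\<in>K t. \<phi> y \<le> \<psi> y)
        \<longrightarrow> U \<phi> \<le> U \<psi>) \<and>
     (\<forall>\<phi> \<alpha> l. continuous_on (K t) \<phi> \<longrightarrow>
        U (\<lambda>y. \<phi> y + \<alpha> * y + l) = U \<phi> + ereal (\<alpha> * x0 + l))"
proof -
  have Q: "prob_space Q" using assms(5) by (simp add: martingale_measure_def)
  have inst: "Ufun_on_compact (marginal Q K t) (K t) x0 (u t)" if t: "t \<le> T" for t
  proof (intro Ufun_on_compact.intro Ufun_on_compact_axioms.intro)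
    show "prob_space (marginal Q K t)"
      unfolding marginal_def by (rule prob_space.prob_space_distr[OF Q path_component_measurable[OF assms(4) t]])
    show "compact (K t)"
      using assms(2,3) t by (cases "t = 0") auto
  qed (use assms(6) t marginal_mean[OF assms(5,4,2) t] in \<open>simp_all add: marginal_def\<close>)
  show ?thesis
    unfolding Let_def
    by (auto simp: Ufun_on_compact.Ufun_finite[OF inst] Ufun_on_compact.Ufun_zero[OF inst]
        Ufun_on_compact.Ufun_concave[OF inst] Ufun_add_affine Ufun_on_compact.space_eq[OF inst]
        intro!: Ufun_mono Ufun_on_compact.mono[OF inst])
qed

end
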